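(* Let $\mathbb{X}$ be a smooth real Banach space and $\mathbb{Y}$ a strictly convex and smooth real Banach space. Let $T\in\mathbb{L}(\mathbb{X},\mathbb{Y})$ with $\operatorname{rank}T=1$ and $\|T\|=1$. If $(x,Tx)$ is not a weak CPP for some $x\in M_T$, then $T$ is an extreme contraction.
   Context: All Banach spaces are real and of dimension greater than $1$. $M_T=\{x\in S_{\mathbb{X}}:\|Tx\|=\|T\|\}$. A norm one $T\in\mathbb{L}(\mathbb{X},\mathbb{Y})$ is an extreme contraction if it is an extreme point of the closed unit ball of $\mathbb{L}(\mathbb{X},\mathbb{Y})$. $B(x,r)=\{u:\|u-x\|<r\}$. $x\perp_B y$ means $\|x+\lambda y\|\ge\|x\|$ for all real $\lambda$; $x^\perp=\{y:x\perp_By\}$. For $x\in S_{\mathbb{X}}$, $y\in S_{\mathbb{Y}}$, $(x,y)$ is a weak CPP if there exist $z\in x^\perp\cap S_{\mathbb{X}}$, $w\in y^\perp\cap S_{\mathbb{Y}}$, $r>0$, $\mu>0$ such that for all $a,b\in\mathbb{R}$, $ax+bz\in B(x,r)\cap S_{\mathbb{X}}$ implies $\|ay+b\mu w\|\le1$. *)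

theory Defs
  imports "HOL-Analysis.Analysis"
begin

definition dim_gt_one :: "'a::real_normed_vector itself \<Rightarrow> bool" where
  "dim_gt_one _ \<longleftrightarrow> (\<exists>u v::'a. independent {u, v} \<and> u \<noteq> v)"

definition smooth_space :: "'a::real_normed_vector itself \<Rightarrow> bool" where
  "smooth_space _ \<longleftrightarrow>
     (\<forall>x::'a. norm x = 1 \<longrightarrow> (\<exists>!f::'a \<Rightarrow>\<^sub>L real. norm f = 1 \<and> blinfun_apply f x = 1))"

definition strictly_convex_space :: "'a::real_normed_vector itself \<Rightarrow> bool" where
  "strictly_convex_space _ \<longleftrightarrow>
     (\<forall>x y::'a. norm x = 1 \<longrightarrow> norm y = 1 \<longrightarrow> x \<noteq> y \<longrightarrow> norm ((1/2) *\<^sub>R (x + y)) < 1)"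

definition bj_orth :: "'a::real_normed_vector \<Rightarrow> 'a \<Rightarrow> bool" where
  "bj_orth x y \<longleftrightarrow> (\<forall>t::real. norm (x + t *\<^sub>R y) \<ge> norm x)"

definition norm_attainment_set :: "('a::real_normed_vector \<Rightarrow>\<^sub>L 'b::real_normed_vector) \<Rightarrow> 'a set" where
  "norm_attainment_set T = {x. norm x = 1 \<and> norm (blinfun_apply T x) = norm T}"

definition weak_CPP :: "'a::real_normed_vector \<Rightarrow> 'b::real_normed_vector \<Rightarrow> bool" where
  "weak_CPP x y \<longleftrightarrow> norm x = 1 \<and> norm y = 1 \<and>
     (\<exists>z w r \<mu>. bj_orth x z \<and> norm z = 1 \<and> bj_orth y w \<and> norm w = 1 \<and>
        r > (0::real) \<and> \<mu> > (0::real) \<and>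
        (\<forall>a b::real. (a *\<^sub>R x + b *\<^sub>R z \<in> ball x r \<and> norm (a *\<^sub>R x + b *\<^sub>R z) = 1)
            \<longrightarrow> norm (a *\<^sub>R y + (b * \<mu>) *\<^sub>R w) \<le> 1))"

end

theory Submission
  imports Defs
begin

text \<open>Suppose T were the midpoint of two distinct contractions A and B, and let g be the
supporting functional of y = T x. Strict convexity of Y forces A x = B x = y; smoothness of X
then forces g \<circ> A = g \<circ> B, both being norm-one functionals attaining their norm at x.
If a contraction C with C x = y did not annihilate the kernel of g \<circ> C, the vectors
z \<in> ker (g \<circ> C) and C z would witness that (x, y) is a weak CPP. Hence A and B both
factor as v \<mapsto> g (A v) y, so A = B.\<close>

lemma norm_blinfun_apply_le_if_norm_le_one:
  fixes A :: "'a::real_normed_vector \<Rightarrow>\<^sub>L 'b::real_normed_vector"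
  assumes "norm A \<le> 1"
  shows "norm (blinfun_apply A v) \<le> norm v"
  using norm_blinfun[of A v] assms mult_right_le_one_le[of "norm v" "norm A"]
  by (simp add: mult.commute)

lemma norm_blinfun_compose_le_one:
  assumes "norm g \<le> 1" and "norm f \<le> 1"
  shows "norm (g o\<^sub>L f) \<le> 1"
  using norm_blinfun_compose[of g f] assms by (meson mult_le_one norm_ge_zero order_trans)

lemma bj_orth_if_supporting_functional:
  fixes g :: "'a::real_normed_vector \<Rightarrow>\<^sub>L real"
  assumes "norm g \<le> 1" and "blinfun_apply g y = norm y" and "blinfun_apply g w = 0"
  shows "bj_orth y w"
  unfolding bj_orth_def
proof
  fix t :: real
  have "norm y = blinfun_apply g (y + t *\<^sub>R w)"
    using assms(2,3) by (simp add: blinfun.add_right blinfun.scaleR_right)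
  also have "\<dots> \<le> norm (y + t *\<^sub>R w)"
    using norm_blinfun_apply_le_if_norm_le_one[OF assms(1)] abs_ge_self
    by (metis order_trans real_norm_def)
  finally show "norm y \<le> norm (y + t *\<^sub>R w)" .
qed

lemma weak_CPP_if_contraction_not_vanishing_on_kernel:
  fixes C :: "'a::real_normed_vector \<Rightarrow>\<^sub>L 'b::real_normed_vector"
    and g :: "'b \<Rightarrow>\<^sub>L real"
  assumes "norm C \<le> 1" and "norm x = 1" and "blinfun_apply C x = y" and "norm y = 1"
    and "norm g \<le> 1" and "blinfun_apply g y = 1"
    and "blinfun_apply g (blinfun_apply C z) = 0" and "blinfun_apply C z \<noteq> 0"
  shows "weak_CPP x y"
proof -
  define u where "u = sgn z"
  define \<mu> where "\<mu> = norm (blinfun_apply C u)"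
  define w where "w = sgn (blinfun_apply C u)"
  have "z \<noteq> 0"
    using assms(8) by auto
  then have Cu: "blinfun_apply C u = (1 / norm z) *\<^sub>R blinfun_apply C z"
    by (simp add: u_def sgn_div_norm blinfun.scaleR_right divide_inverse_commute)
  have gCu: "blinfun_apply g (blinfun_apply C u) = 0"
    using assms(7) by (simp add: Cu blinfun.scaleR_right)
  have "blinfun_apply C u \<noteq> 0"
    using Cu \<open>z \<noteq> 0\<close> assms(8) by simp
  then have norms: "norm u = 1" "norm w = 1" "\<mu> > 0"
    using \<open>z \<noteq> 0\<close> by (simp_all add: u_def w_def \<mu>_def norm_sgn)
  have \<mu>w: "\<mu> *\<^sub>R w = blinfun_apply C u"
    by (simp add: \<mu>_def w_def sgn_div_norm \<open>blinfun_apply C u \<noteq> 0\<close>)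
  have "bj_orth x u"
    using norm_blinfun_compose_le_one[OF assms(5,1)] assms(2,3,6) gCu
    by (intro bj_orth_if_supporting_functional) auto
  moreover have "bj_orth y w"
    using assms(4,5,6) gCu
    by (intro bj_orth_if_supporting_functional) (auto simp: w_def sgn_div_norm blinfun.scaleR_right)
  \<comment> \<open>C itself maps the unit sphere of span {x, u} into the unit ball, so any radius works.\<close>
  moreover have "norm (a *\<^sub>R y + (b * \<mu>) *\<^sub>R w) \<le> 1"
    if "norm (a *\<^sub>R x + b *\<^sub>R u) = 1" for a b
  proof -
    have "a *\<^sub>R y + (b * \<mu>) *\<^sub>R w = blinfun_apply C (a *\<^sub>R x + b *\<^sub>R u)"
      using assms(3) \<mu>w by (simp add: blinfun.add_right blinfun.scaleR_right flip: scaleR_scaleR)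
    then show ?thesis
      using norm_blinfun_apply_le_if_norm_le_one[OF assms(1)] that by metis
  qed
  ultimately show ?thesis
    unfolding weak_CPP_def using assms(2,4) norms
    by (intro conjI exI[of _ u] exI[of _ w] exI[of _ 1] exI[of _ \<mu>]) auto
qed

lemma contraction_factors_through_supporting_functional:
  fixes C :: "'a::real_normed_vector \<Rightarrow>\<^sub>L 'b::real_normed_vector"
    and g :: "'b \<Rightarrow>\<^sub>L real"
  assumes "norm C \<le> 1" and "norm x = 1" and "blinfun_apply C x = y" and "norm y = 1"
    and "norm g \<le> 1" and "blinfun_apply g y = 1" and "\<not> weak_CPP x y"
  shows "blinfun_apply C v = blinfun_apply g (blinfun_apply C v) *\<^sub>R y"
proof -
  define z where "z = v - blinfun_apply g (blinfun_apply C v) *\<^sub>R x"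
  have "blinfun_apply g (blinfun_apply C z) = 0"
    using assms(3,6) by (simp add: z_def blinfun.diff_right blinfun.scaleR_right)
  then have "blinfun_apply C z = 0"
    using weak_CPP_if_contraction_not_vanishing_on_kernel assms by blast
  then show ?thesis
    using assms(3) by (simp add: z_def blinfun.diff_right blinfun.scaleR_right)
qed

lemma not_extreme_point_of_convex_midpoint:
  fixes S :: "'a::real_vector set"
  assumes "convex S" and "x \<in> S" and "\<not> x extreme_point_of S"
  obtains a b where "a \<in> S" "b \<in> S" "a \<noteq> b" "x = midpoint a b"
proof -
  obtain a b u where ab: "a \<in> S" "b \<in> S" "a \<noteq> b" and u: "0 < u" "u < 1"
    and x: "x = (1 - u) *\<^sub>R a + u *\<^sub>R b"
    using assms(2,3) unfolding extreme_point_of_def in_segment by blast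
  define e where "e = min u (1 - u)"
  have e: "0 < e" "e \<le> u" "e \<le> 1 - u"
    using u by (auto simp: e_def)
  have in_S: "x + t *\<^sub>R (b - a) \<in> S" if "\<bar>t\<bar> \<le> e" for t
  proof -
    have "x + t *\<^sub>R (b - a) = (1 - (u + t)) *\<^sub>R a + (u + t) *\<^sub>R b"
      by (simp add: x algebra_simps)
    moreover have "0 \<le> u + t" "u + t \<le> 1"
      using that e by auto
    ultimately have "x + t *\<^sub>R (b - a) \<in> closed_segment a b"
      unfolding in_segment by blast
    then show ?thesis
      using assms(1) ab convex_contains_segment by blast
  qed
  show ?thesis
  proof
    show "x + (- e) *\<^sub>R (b - a) \<in> S" "x + e *\<^sub>R (b - a) \<in> S"
      using in_S[of "- e"] in_S[of e] e by auto
    show "x + (- e) *\<^sub>R (b - a) \<noteq> x + e *\<^sub>R (b - a)"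
    proof
      assume "x + (- e) *\<^sub>R (b - a) = x + e *\<^sub>R (b - a)"
      then have "(2 * e) *\<^sub>R (b - a) = 0"
        by (metis add_diff_cancel_left diff_minus_eq_add diff_self mult_2 scaleR_add_left
            scaleR_minus_left)
      with e ab show False
        by simp
    qed
    show "x = midpoint (x + (- e) *\<^sub>R (b - a)) (x + e *\<^sub>R (b - a))"
      using midpoint_eq_iff[of "x + (- e) *\<^sub>R (b - a)" "x + e *\<^sub>R (b - a)" x] by simp
  qed
qed

lemma strictly_convex_midpoint_unit_eq:
  fixes a b :: "'a::real_normed_vector"
  assumes "strictly_convex_space TYPE('a)"
    and "norm a \<le> 1" and "norm b \<le> 1" and "norm (midpoint a b) = 1"
  shows "a = b"
proof (rule ccontr)
  assume "a \<noteq> b"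
  have "2 \<le> norm a + norm b"
    using assms(4) norm_triangle_ineq[of a b] by (simp add: midpoint_def)
  then have "norm a = 1" "norm b = 1"
    using assms(2,3) by linarith+
  moreover have "midpoint a b = (1/2) *\<^sub>R (a + b)"
    by (simp add: midpoint_def)
  ultimately have "norm (midpoint a b) < 1"
    using assms(1) \<open>a \<noteq> b\<close> unfolding strictly_convex_space_def by metis
  with assms(4) show False
    by simp
qed

lemma smooth_space_supporting_functional_unique:
  fixes f h :: "'a::real_normed_vector \<Rightarrow>\<^sub>L real"
  assumes "smooth_space TYPE('a)" and "norm x = 1"
    and "norm f \<le> 1" and "blinfun_apply f x = 1"
    and "norm h \<le> 1" and "blinfun_apply h x = 1"
  shows "f = h"
proof -
  have "norm f = 1" if "norm f \<le> 1" "blinfun_apply f x = 1" for f :: "'a \<Rightarrow>\<^sub>L real"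
    using norm_blinfun[of f x] that assms(2) by simp
  then show ?thesis
    using assms unfolding smooth_space_def by blast
qed

theorem mainTheorem4:
  fixes T :: "'a::banach \<Rightarrow>\<^sub>L 'b::banach" and x :: 'a
  assumes "dim_gt_one TYPE('a)" and "dim_gt_one TYPE('b)"
    and "smooth_space TYPE('a)"
    and "strictly_convex_space TYPE('b)" and "smooth_space TYPE('b)"
    and "dim (range (blinfun_apply T)) = 1"
    and "norm T = 1"
    and "x \<in> norm_attainment_set T"
    and "\<not> weak_CPP x (blinfun_apply T x)"
  shows "T extreme_point_of cball 0 1"
proof (rule ccontr)
  assume "\<not> T extreme_point_of cball 0 1"
  then obtain A B where "norm A \<le> 1" "norm B \<le> 1" "A \<noteq> B" and T: "T = midpoint A B"
    using not_extreme_point_of_convex_midpoint[of "cball 0 1" T] assms(7) by auto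
  define y where "y = blinfun_apply T x"
  have "norm x = 1" "norm y = 1"
    using assms(7,8) by (auto simp: norm_attainment_set_def y_def)
  obtain g :: "'b \<Rightarrow>\<^sub>L real" where "norm g = 1" "blinfun_apply g y = 1"
    using assms(5) \<open>norm y = 1\<close> unfolding smooth_space_def by blast
  have y: "y = midpoint (blinfun_apply A x) (blinfun_apply B x)"
    by (simp add: y_def T midpoint_def blinfun.add_left blinfun.scaleR_left)
  have "blinfun_apply A x = blinfun_apply B x"
    using norm_blinfun_apply_le_if_norm_le_one[OF \<open>norm A \<le> 1\<close>, of x]
      norm_blinfun_apply_le_if_norm_le_one[OF \<open>norm B \<le> 1\<close>, of x] \<open>norm x = 1\<close> \<open>norm y = 1\<close> y
    by (intro strictly_convex_midpoint_unit_eq[OF assms(4)]) auto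
  then have Ax: "blinfun_apply A x = y" and Bx: "blinfun_apply B x = y"
    using y by simp_all
  have "g o\<^sub>L A = g o\<^sub>L B"
    using norm_blinfun_compose_le_one[of g A] norm_blinfun_compose_le_one[of g B]
      \<open>norm A \<le> 1\<close> \<open>norm B \<le> 1\<close> \<open>norm g = 1\<close> \<open>blinfun_apply g y = 1\<close> Ax Bx
    by (intro smooth_space_supporting_functional_unique[OF assms(3) \<open>norm x = 1\<close>]) auto
  moreover have "blinfun_apply C v = blinfun_apply (g o\<^sub>L C) v *\<^sub>R y"
    if "norm C \<le> 1" "blinfun_apply C x = y" for C :: "'a \<Rightarrow>\<^sub>L 'b" and v
    using contraction_factors_through_supporting_functional[OF that(1) \<open>norm x = 1\<close> that(2)]
      \<open>norm y = 1\<close> \<open>norm g = 1\<close> \<open>blinfun_apply g y = 1\<close> assms(9) y_def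
    by simp
  ultimately have "A = B"
    using \<open>norm A \<le> 1\<close> \<open>norm B \<le> 1\<close> Ax Bx by (metis blinfun_eqI)
  with \<open>A \<noteq> B\<close> show False ..
qed

end
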